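(* In the setting below with $P=\mathfrak S$ and the absolute error criterion, assume $\lambda\in\ell_{\tau_0}$ for some $\tau_0\in(0,\infty)$. Then: (i) if $\lambda_1<1$, $\{S_d\}$ is strongly polynomially tractable; (ii) if $\lambda_1=1>\lambda_2$ and $b_d\in O(1)$, $\{S_d\}$ is strongly polynomially tractable; (iii) if $\lambda_1=1$ and $b_d\in O(\ln d)$, $\{S_d\}$ is polynomially tractable.
   Context: Setting: $S_1:H_1\to G_1$ is a compact linear operator between real Hilbert spaces ($H_1$ infinite-dimensional separable); $\lambda=(\lambda_m)_{m\in\mathbb N}$, $\lambda_1\ge\lambda_2\ge\dots\ge0$, are the eigenvalues of $S_1^\dagger S_1$. $S_d=S_1^{\otimes d}:H_1^{\otimes d}\to G_1^{\otimes d}$. For each $d$ fix $\emptyset\ne I_d=\{i_1<\dots<i_{a_d}\}\subset\{1,\dots,d\}$ ($I_1=\{1\}$), put $a_d=\#I_d$, $b_d=d-a_d$, and fix one type $P\in\{\mathfrak S,\mathfrak A\}$ for all $d$; the problem $\{S_d\}$ is the family of restrictions of $S_d$ to the $I_d$-symmetric subspace (if $P=\mathfrak S$) or $I_d$-antisymmetric subspace (if $P=\mathfrak A$) of $H_1^{\otimes d}$, i.e. the range of $\frac1{a_d!}\sum_{\pi}(\pm1)U_\pi$, the sum over permutations $\pi$ of $\{1,\dots,d\}$ fixing all points outside $I_d$, $U_\pi(f_1\otimes\cdots\otimes f_d)=f_{\pi(1)}\otimes\cdots\otimes f_{\pi(d)}$, sign $(-1)^{|\pi|}$ used for $\mathfrak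 A$. Let $\nabla_d=\{k\in\mathbb N^d:k_{i_1}\le\dots\le k_{i_{a_d}}\}$ for $P=\mathfrak S$ and with strict inequalities for $P=\mathfrak A$; $\lambda_{d,k}=\prod_{l=1}^d\lambda_{k_l}$; $\psi:\mathbb N\to\nabla_d$ a bijection with $\lambda_{d,\psi(1)}\ge\lambda_{d,\psi(2)}\ge\cdots$. These are exactly the eigenvalues of $S_d^\dagger S_d$ on the subspace, and the information complexity (absolute error) is $n(\epsilon,d)=\#\{k\in\nabla_d:\lambda_{d,k}>\epsilon^2\}$, the initial error $\epsilon^{\rm init}_d=\sqrt{\lambda_{d,\psi(1)}}$ (equal to $\lambda_1^{d/2}$ if $P=\mathfrak S$, and $\sqrt{\lambda_1^{b_d}\lambda_1\lambda_2\cdots\lambda_{a_d}}$ if $P=\mathfrak A$). Polynomially tractable: $\exists C,p>0,q\ge0$ with $n(\epsilon,d)\le C\epsilon^{-p}d^q$ for all $d\in\mathbb N,\epsilon\in(0,1]$; strongly polynomially tractable: this with $q=0$. Standing assumptions: $\lambda_2>0$ and $\epsilon_d^{\rm init}>0$ for all $d$. $\ell_\tau$: sequences with $\|\lambda\|_{\ell_\tau}^\tau=\sum_m\lambda_m^\tau<\infty$. *)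

theory Defs
  imports "HOL-Analysis.Analysis" "HOL-Library.Landau_Symbols"
begin

text \<open>Eigenvalues are indexed from 1: lam 1 \<ge> lam 2 \<ge> ... \<ge> 0 (lam 0 is unused).
  A multi-index k in N^d is represented as k :: nat \<Rightarrow> nat with k l \<ge> 1 for
  l in {1..d} and k l = 0 outside {1..d}.\<close>

definition nabla_sym :: "(nat \<Rightarrow> nat set) \<Rightarrow> nat \<Rightarrow> (nat \<Rightarrow> nat) set" where
  "nabla_sym I d = {k. (\<forall>l. (l \<in> {1..d} \<longrightarrow> 1 \<le> k l) \<and> (l \<notin> {1..d} \<longrightarrow> k l = 0))
                      \<and> (\<forall>i\<in>I d. \<forall>j\<in>I d. i \<le> j \<longrightarrow> k i \<le> k j)}"

definition lam_dk :: "(nat \<Rightarrow> real) \<Rightarrow> nat \<Rightarrow> (nat \<Rightarrow> nat) \<Rightarrow> real" where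
  "lam_dk lam d k = (\<Prod>l\<in>{1..d}. lam (k l))"

text \<open>Set whose cardinality is the information complexity n(eps,d) (absolute error, P = S).\<close>
definition info_set :: "(nat \<Rightarrow> real) \<Rightarrow> (nat \<Rightarrow> nat set) \<Rightarrow> real \<Rightarrow> nat \<Rightarrow> (nat \<Rightarrow> nat) set" where
  "info_set lam I eps d = {k \<in> nabla_sym I d. lam_dk lam d k > eps\<^sup>2}"

definition poly_tractable :: "(nat \<Rightarrow> real) \<Rightarrow> (nat \<Rightarrow> nat set) \<Rightarrow> bool" where
  "poly_tractable lam I \<longleftrightarrow> (\<exists>C p q. C > 0 \<and> p > 0 \<and> q \<ge> 0 \<and>
     (\<forall>d\<ge>1. \<forall>eps. 0 < eps \<and> eps \<le> 1 \<longrightarrow>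
        finite (info_set lam I eps d) \<and>
        real (card (info_set lam I eps d)) \<le> C * eps powr (-p) * real d powr q))"

definition strongly_poly_tractable :: "(nat \<Rightarrow> real) \<Rightarrow> (nat \<Rightarrow> nat set) \<Rightarrow> bool" where
  "strongly_poly_tractable lam I \<longleftrightarrow> (\<exists>C p. C > 0 \<and> p > 0 \<and>
     (\<forall>d\<ge>1. \<forall>eps. 0 < eps \<and> eps \<le> 1 \<longrightarrow>
        finite (info_set lam I eps d) \<and>
        real (card (info_set lam I eps d)) \<le> C * eps powr (-p)))"

definition b_of :: "(nat \<Rightarrow> nat set) \<Rightarrow> nat \<Rightarrow> nat" where
  "b_of I d = d - card (I d)"

end

theory Submission
  imports Defs
begin

(* For tau > 0, an index k is counted by n(eps,d) only if lambda_{d,k}^tau > eps^(2 tau),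
   so n(eps,d) \<le> eps^(-2 tau) \<cdot> \<Sum>_k lambda_{d,k}^tau.  Entries of k are bounded by
   a level M where the eigenvalues fall below eps^2.  A multi-index is monotone
   on T \<subseteq> I_d, hence determined by its entries outside T and the multiplicities
   of the values on T; this gives the generating-function bound
     \<Sum>_k lambda_{d,k}^tau \<le> A^(d - #T) \<cdot> \<Prod>_{m\<ge>2} (1 + mu_m + ... + mu_m^#T),
   with mu_m = lambda_m^tau and A = \<Sum>_m mu_m (using lambda_1 = 1 when T \<noteq> {}).
   Choosing tau large makes A \<le> 1 when lambda_1 < 1 (part (i), T = {}), or makes
   mu_m \<le> 1/2 for all m > r when lambda_1 = 1 (parts (ii), (iii), T = I_d; r = 1
   if lambda_2 < 1), so the product is \<le> (a_d+1)^(r-1) exp (2A).  The conditions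
   on b_d then bound the remaining factor A^b_d. *)

lemma card_tail_eq_sum_counts:
  fixes v :: "'a \<Rightarrow> nat"
  assumes "finite T" and "\<forall>x\<in>T. v x \<le> M"
  shows "card {x\<in>T. m \<le> v x} = (\<Sum>m'=m..M. card {x\<in>T. v x = m'})"
proof -
  have "{x\<in>T. m \<le> v x} = (\<Union>m'\<in>{m..M}. {x\<in>T. v x = m'})"
    using assms(2) by auto
  also have "card \<dots> = (\<Sum>m'=m..M. card {x\<in>T. v x = m'})"
    by (rule card_UN_disjoint) (use assms(1) in auto)
  finally show ?thesis .
qed

(* A monotone function on a finite linearly ordered set is determined by the
   sizes of its upper level sets: if v l < w l, then {v \<ge> w l} lies strictly
   above l while {w \<ge> w l} contains l and everything above it. *)
lemma monotone_eq_if_tail_counts_eq: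
  fixes T :: "'a::linorder set" and v w :: "'a \<Rightarrow> nat"
  assumes fin: "finite T"
    and mono_v: "\<forall>i\<in>T. \<forall>j\<in>T. i \<le> j \<longrightarrow> v i \<le> v j"
    and mono_w: "\<forall>i\<in>T. \<forall>j\<in>T. i \<le> j \<longrightarrow> w i \<le> w j"
    and tails: "\<And>m. card {x\<in>T. m \<le> v x} = card {x\<in>T. m \<le> w x}"
    and l: "l \<in> T"
  shows "v l = w l"
proof -
  have no_jump: False
    if mono_f: "\<forall>i\<in>T. \<forall>j\<in>T. i \<le> j \<longrightarrow> f i \<le> f j"
      and mono_g: "\<forall>i\<in>T. \<forall>j\<in>T. i \<le> j \<longrightarrow> g i \<le> g j"
      and tails_fg: "card {x\<in>T. g l \<le> f x} = card {x\<in>T. g l \<le> g x}"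
      and lt: "f l < g l" for f g :: "'a \<Rightarrow> nat"
  proof -
    have "{x\<in>T. g l \<le> f x} \<subseteq> {x\<in>T. l < x}"
      using mono_f lt l by (force simp: not_less[symmetric])
    then have "card {x\<in>T. g l \<le> f x} \<le> card {x\<in>T. l < x}"
      by (rule card_mono[rotated]) (use fin in auto)
    also have "\<dots> < card {x\<in>T. l \<le> x}"
      by (rule psubset_card_mono) (use fin l in auto)
    also have "\<dots> \<le> card {x\<in>T. g l \<le> g x}"
      by (rule card_mono) (use fin mono_g l in auto)
    finally show False using tails_fg by simp
  qed
  show ?thesis
    using no_jump[OF mono_v mono_w] no_jump[OF mono_w mono_v] tails
    by (metis linorder_neqE_nat)
qed

(* For monotone functions with values in {1..M} the multiplicities of the
   values 2, ..., M already suffice; the value 1 takes the remaining places. *)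
lemma monotone_eq_if_counts_eq:
  fixes T :: "'a::linorder set" and v w :: "'a \<Rightarrow> nat"
  assumes fin: "finite T"
    and mono_v: "\<forall>i\<in>T. \<forall>j\<in>T. i \<le> j \<longrightarrow> v i \<le> v j"
    and mono_w: "\<forall>i\<in>T. \<forall>j\<in>T. i \<le> j \<longrightarrow> w i \<le> w j"
    and range_v: "\<forall>x\<in>T. v x \<in> {1..M}" and range_w: "\<forall>x\<in>T. w x \<in> {1..M}"
    and counts: "\<forall>m\<in>{2..M}. card {x\<in>T. v x = m} = card {x\<in>T. w x = m}"
    and l: "l \<in> T"
  shows "v l = w l"
proof (rule monotone_eq_if_tail_counts_eq[OF fin mono_v mono_w _ l])
  fix m :: nat
  show "card {x\<in>T. m \<le> v x} = card {x\<in>T. m \<le> w x}"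
  proof (cases "m \<le> 1")
    case True
    then have "{x\<in>T. m \<le> v x} = T" "{x\<in>T. m \<le> w x} = T"
      using range_v range_w by auto
    then show ?thesis by simp
  next
    case False
    then show ?thesis
      using card_tail_eq_sum_counts[OF fin, of v M m] card_tail_eq_sum_counts[OF fin, of w M m]
        range_v range_w counts by (auto intro!: sum.cong)
  qed
qed

lemma prod_by_value_counts:
  fixes T :: "'a set" and k :: "'a \<Rightarrow> nat" and mu :: "nat \<Rightarrow> real"
  assumes fin: "finite T" and range_k: "\<forall>x\<in>T. k x \<in> {1..M}" and one: "mu 1 = 1"
  shows "(\<Prod>x\<in>T. mu (k x)) = (\<Prod>m=2..M. mu m ^ card {x\<in>T. k x = m})"
proof -
  have "(\<Prod>x\<in>T. mu (k x)) = (\<Prod>m=1..M. \<Prod>x\<in>{x\<in>T. k x = m}. mu (k x))"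
    by (rule prod.group[symmetric]) (use fin range_k in auto)
  also have "\<dots> = (\<Prod>m=1..M. mu m ^ card {x\<in>T. k x = m})"
    by (rule prod.cong) simp_all
  also have "\<dots> = (\<Prod>m=2..M. mu m ^ card {x\<in>T. k x = m})"
    by (rule prod.mono_neutral_right) (use one in \<open>auto simp: not_le numeral_2_eq_2 less_Suc_eq_le\<close>)
  finally show ?thesis .
qed

definition trunc_nabla :: "(nat \<Rightarrow> nat set) \<Rightarrow> nat \<Rightarrow> nat \<Rightarrow> (nat \<Rightarrow> nat) set" where
  "trunc_nabla I d M = {k \<in> nabla_sym I d. \<forall>l\<in>{1..d}. k l \<le> M}"

definition count_code :: "nat set \<Rightarrow> nat \<Rightarrow> nat \<Rightarrow> (nat \<Rightarrow> nat) \<Rightarrow> (nat \<Rightarrow> nat) \<times> (nat \<Rightarrow> nat)" where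
  "count_code T d M k = (restrict k ({1..d} - T), restrict (\<lambda>m. card {x\<in>T. k x = m}) {2..M})"

lemma trunc_nabla_range:
  assumes "k \<in> trunc_nabla I d M"
  shows "\<forall>l\<in>{1..d}. k l \<in> {1..M}" and "\<forall>l. l \<notin> {1..d} \<longrightarrow> k l = 0"
    and "\<forall>i\<in>I d. \<forall>j\<in>I d. i \<le> j \<longrightarrow> k i \<le> k j"
  using assms unfolding trunc_nabla_def nabla_sym_def by auto

(* The encoding is injective, because k is monotone on T \<subseteq> I d. *)
lemma count_code_inj:
  assumes Id: "I d \<subseteq> {1..d}" and T: "T \<subseteq> I d"
  shows "inj_on (count_code T d M) (trunc_nabla I d M)"
proof (rule inj_onI)
  fix k k' assume k: "k \<in> trunc_nabla I d M" and k': "k' \<in> trunc_nabla I d M"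
    and code: "count_code T d M k = count_code T d M k'"
  have finT: "finite T" using finite_subset[OF order_trans[OF T Id]] by simp
  have restr: "restrict k ({1..d} - T) = restrict k' ({1..d} - T)"
    and cnt: "restrict (\<lambda>m. card {x\<in>T. k x = m}) {2..M}
              = restrict (\<lambda>m. card {x\<in>T. k' x = m}) {2..M}"
    using code unfolding count_code_def by simp_all
  have outside: "k x = k' x" if "x \<in> {1..d} - T" for x
    using fun_cong[OF restr, of x] that by simp
  have counts: "\<forall>m\<in>{2..M}. card {x\<in>T. k x = m} = card {x\<in>T. k' x = m}"
  proof
    fix m :: nat assume "m \<in> {2..M}"
    then show "card {x\<in>T. k x = m} = card {x\<in>T. k' x = m}"
      using fun_cong[OF cnt, of m] by simp
  qed
  have inside: "k x = k' x" if "x \<in> T" for x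
  proof (rule monotone_eq_if_counts_eq[OF finT _ _ _ _ counts that])
    show "\<forall>i\<in>T. \<forall>j\<in>T. i \<le> j \<longrightarrow> k i \<le> k j" "\<forall>i\<in>T. \<forall>j\<in>T. i \<le> j \<longrightarrow> k' i \<le> k' j"
      using trunc_nabla_range(3)[OF k] trunc_nabla_range(3)[OF k'] T by (simp_all add: subset_iff)
    show "\<forall>x\<in>T. k x \<in> {1..M}" "\<forall>x\<in>T. k' x \<in> {1..M}"
      using trunc_nabla_range(1)[OF k] trunc_nabla_range(1)[OF k'] T Id by (simp_all add: subset_iff)
  qed
  show "k = k'"
  proof
    fix x show "k x = k' x"
      using outside inside trunc_nabla_range(2)[OF k] trunc_nabla_range(2)[OF k'] 
      by (cases "x \<in> {1..d}"; cases "x \<in> T") simp_all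
  qed
qed

lemma count_code_image:
  assumes "T \<subseteq> {1..d}" and "finite T"
  shows "count_code T d M ` trunc_nabla I d M
           \<subseteq> PiE ({1..d} - T) (\<lambda>_. {1..M}) \<times> PiE {2..M} (\<lambda>_. {..card T})"
proof
  fix z assume "z \<in> count_code T d M ` trunc_nabla I d M"
  then obtain k where k: "k \<in> trunc_nabla I d M" and z: "z = count_code T d M k" by auto
  have "card {x\<in>T. k x = m} \<le> card T" for m
    by (rule card_mono[OF assms(2)]) auto
  then show "z \<in> PiE ({1..d} - T) (\<lambda>_. {1..M}) \<times> PiE {2..M} (\<lambda>_. {..card T})"
    using trunc_nabla_range(1)[OF k] unfolding z count_code_def by auto
qed

(* Generating-function bound for the truncated index set: entries outside T are
   free, while on T only the multiplicities of the values matter, each at most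
   card T.  This is where symmetry of the coordinates in T is exploited. *)
lemma weighted_sum_trunc_nabla_le:
  fixes mu :: "nat \<Rightarrow> real"
  assumes Id: "I d \<subseteq> {1..d}" and T: "T \<subseteq> I d" and mu_nonneg: "\<forall>m. 0 \<le> mu m"
    and one: "mu 1 = 1 \<or> T = {}"
  shows "finite (trunc_nabla I d M)"
    and "(\<Sum>k\<in>trunc_nabla I d M. \<Prod>l=1..d. mu (k l))
           \<le> (\<Sum>m=1..M. mu m) ^ (d - card T) * (\<Prod>m=2..M. \<Sum>c\<le>card T. mu m ^ c)"
proof -
  define P1 where "P1 = PiE ({1..d} - T) (\<lambda>_. {1..M})"
  define P2 where "P2 = PiE {2..M} (\<lambda>_. {..card T})"
  define G where "G z = (\<Prod>l\<in>{1..d} - T. mu (fst z l)) * (\<Prod>m=2..M. mu m ^ snd z m)"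
    for z :: "(nat \<Rightarrow> nat) \<times> (nat \<Rightarrow> nat)"
  have TI: "T \<subseteq> {1..d}" using T Id by blast
  have finT: "finite T" using finite_subset[OF TI] by simp
  have inj: "inj_on (count_code T d M) (trunc_nabla I d M)"
    by (rule count_code_inj[of I d, OF Id T])
  have img: "count_code T d M ` trunc_nabla I d M \<subseteq> P1 \<times> P2"
    unfolding P1_def P2_def by (rule count_code_image[OF TI finT])
  have finP: "finite (P1 \<times> P2)"
    unfolding P1_def P2_def by (intro finite_cartesian_product finite_PiE) auto
  show fin: "finite (trunc_nabla I d M)"
    by (rule inj_on_finite[OF inj img finP])
  have weight: "(\<Prod>l=1..d. mu (k l)) = G (count_code T d M k)"
    if k: "k \<in> trunc_nabla I d M" for k
  proof -
    have "(\<Prod>l=1..d. mu (k l)) = (\<Prod>l\<in>{1..d} - T. mu (k l)) * (\<Prod>l\<in>T. mu (k l))"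
      by (rule prod.subset_diff[OF TI]) simp
    also have "(\<Prod>l\<in>T. mu (k l)) = (\<Prod>m=2..M. mu m ^ card {x\<in>T. k x = m})"
      using one
    proof
      assume "mu 1 = 1"
      then show ?thesis
        using prod_by_value_counts[OF finT] trunc_nabla_range(1)[OF k] TI by blast
    qed simp
    finally show ?thesis unfolding G_def count_code_def by simp
  qed
  have G_nonneg: "0 \<le> G z" for z
    unfolding G_def using mu_nonneg by (intro mult_nonneg_nonneg prod_nonneg) auto
  have "(\<Sum>k\<in>trunc_nabla I d M. \<Prod>l=1..d. mu (k l)) = (\<Sum>k\<in>trunc_nabla I d M. G (count_code T d M k))"
    by (rule sum.cong[OF refl weight])
  also have "\<dots> = (\<Sum>z\<in>count_code T d M ` trunc_nabla I d M. G z)"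
    by (simp add: sum.reindex[OF inj])
  also have "\<dots> \<le> (\<Sum>z\<in>P1 \<times> P2. G z)"
    by (rule sum_mono2[OF finP img]) (simp add: G_nonneg)
  also have "\<dots> = (\<Sum>u\<in>P1. \<Prod>l\<in>{1..d} - T. mu (u l)) * (\<Sum>c\<in>P2. \<Prod>m=2..M. mu m ^ c m)"
    unfolding G_def sum_product sum.cartesian_product by (simp add: case_prod_beta)
  also have "\<dots> = (\<Prod>l\<in>{1..d} - T. \<Sum>m=1..M. mu m) * (\<Prod>m=2..M. \<Sum>c\<le>card T. mu m ^ c)"
    unfolding P1_def P2_def by (intro arg_cong2[where f=times] prod_sum_PiE[symmetric]) auto
  also have "\<dots> = (\<Sum>m=1..M. mu m) ^ (d - card T) * (\<Prod>m=2..M. \<Sum>c\<le>card T. mu m ^ c)"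
    using card_Diff_subset[OF finT TI] by simp
  finally show "(\<Sum>k\<in>trunc_nabla I d M. \<Prod>l=1..d. mu (k l))
           \<le> (\<Sum>m=1..M. mu m) ^ (d - card T) * (\<Prod>m=2..M. \<Sum>c\<le>card T. mu m ^ c)" .
qed

lemma lam_antimono:
  fixes lam :: "nat \<Rightarrow> real"
  assumes noninc: "\<forall>m\<ge>1. lam (Suc m) \<le> lam m" and "1 \<le> i" and "i \<le> j"
  shows "lam j \<le> lam i"
  using assms(3)
proof (induction j rule: dec_induct)
  case (step n)
  then show ?case using noninc assms(2) by (meson order_trans)
qed simp

lemma lam_dk_le_factor:
  fixes lam :: "nat \<Rightarrow> real"
  assumes nonneg: "\<forall>m\<ge>1. 0 \<le> lam m" and le1: "\<forall>m\<ge>1. lam m \<le> 1"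
    and k: "\<forall>l\<in>{1..d}. 1 \<le> k l" and l: "l \<in> {1..d}"
  shows "lam_dk lam d k \<le> lam (k l)"
proof -
  have "lam_dk lam d k = lam (k l) * (\<Prod>x\<in>{1..d} - {l}. lam (k x))"
    unfolding lam_dk_def using l by (simp add: prod.remove)
  moreover have "(\<Prod>x\<in>{1..d} - {l}. lam (k x)) \<le> 1"
    by (rule prod_le_1) (use nonneg le1 k in auto)
  moreover have "0 \<le> lam (k l)" using nonneg k l by auto
  ultimately show ?thesis by (simp add: mult_left_le)
qed

lemma info_set_subset_trunc_nabla:
  fixes lam :: "nat \<Rightarrow> real"
  assumes nonneg: "\<forall>m\<ge>1. 0 \<le> lam m" and le1: "\<forall>m\<ge>1. lam m \<le> 1"
    and small: "\<forall>m>M. lam m < eps\<^sup>2"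
  shows "info_set lam I eps d \<subseteq> trunc_nabla I d M"
proof
  fix k assume k: "k \<in> info_set lam I eps d"
  then have kn: "k \<in> nabla_sym I d" and big: "eps\<^sup>2 < lam_dk lam d k"
    unfolding info_set_def by auto
  have pos: "\<forall>l\<in>{1..d}. 1 \<le> k l" using kn unfolding nabla_sym_def by auto
  have "k l \<le> M" if l: "l \<in> {1..d}" for l
    using lam_dk_le_factor[OF nonneg le1 pos l] big small by (meson less_trans not_le_imp_less not_less)
  then show "k \<in> trunc_nabla I d M" unfolding trunc_nabla_def using kn by auto
qed

lemma eventually_lam_lt:
  fixes lam :: "nat \<Rightarrow> real"
  assumes tau: "0 < tau" and summ: "summable (\<lambda>m. lam (Suc m) powr tau)" and e: "0 < e"
  obtains N where "\<forall>m>N. lam m < e"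
proof -
  have "(\<lambda>m. lam (Suc m) powr tau) \<longlonglongrightarrow> 0" by (rule summable_LIMSEQ_zero[OF summ])
  then have "eventually (\<lambda>n. lam (Suc n) powr tau < e powr tau) sequentially"
    using e by (intro order_tendstoD(2)) auto
  then obtain N where N: "\<forall>n\<ge>N. lam (Suc n) powr tau < e powr tau"
    by (auto simp: eventually_sequentially)
  have "lam m < e" if "m > N" for m
  proof (rule ccontr)
    assume "\<not> lam m < e"
    then have "e powr tau \<le> lam m powr tau" using e tau by (intro powr_mono2) auto
    moreover have "m = Suc (m - 1)" "m - 1 \<ge> N" using that by auto
    ultimately show False using N by (metis not_le)
  qed
  then show ?thesis using that by blast
qed

lemma card_le_weight_sum:
  fixes w :: "'a \<Rightarrow> real"
  assumes big: "\<forall>k\<in>S. c \<le> w k" and c: "0 < c"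
  shows "real (card S) \<le> inverse c * (\<Sum>k\<in>S. w k)"
proof -
  have "c * real (card S) = (\<Sum>k\<in>S. c)" by simp
  also have "\<dots> \<le> (\<Sum>k\<in>S. w k)" using big by (intro sum_mono) auto
  finally show ?thesis using c by (simp add: field_simps)
qed

lemma info_set_weight_ge:
  fixes lam :: "nat \<Rightarrow> real"
  assumes nonneg: "\<forall>m\<ge>1. 0 \<le> lam m" and eps: "0 < eps" and tau: "0 \<le> tau"
    and k: "k \<in> info_set lam I eps d"
  shows "eps powr (2*tau) \<le> (\<Prod>l=1..d. lam (k l) powr tau)"
proof -
  have "eps powr (2*tau) = (eps powr 2) powr tau" by (simp add: powr_powr)
  also have "\<dots> = (eps\<^sup>2) powr tau" using eps by simp
  also have "\<dots> \<le> lam_dk lam d k powr tau"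
    using k tau eps unfolding info_set_def by (intro powr_mono2) auto
  also have "\<dots> = (\<Prod>l=1..d. lam (k l) powr tau)"
    using k nonneg unfolding info_set_def nabla_sym_def lam_dk_def
    by (auto intro!: prod_powr_distrib)
  finally show ?thesis .
qed

lemma card_info_set_le:
  fixes lam :: "nat \<Rightarrow> real"
  assumes nonneg: "\<forall>m\<ge>1. 0 \<le> lam m" and le1: "\<forall>m\<ge>1. lam m \<le> 1"
    and Id: "I d \<subseteq> {1..d}" and T: "T \<subseteq> I d" and eps: "0 < eps" and tau: "0 < tau"
    and summ: "summable (\<lambda>m. lam (Suc m) powr tau)" and one: "lam 1 = 1 \<or> T = {}"
  shows "finite (info_set lam I eps d)"
    and "\<exists>M. real (card (info_set lam I eps d))
           \<le> eps powr (-(2*tau)) * (\<Sum>m. lam (Suc m) powr tau) ^ (d - card T)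
              * (\<Prod>m=2..M. \<Sum>c\<le>card T. (lam m powr tau) ^ c)"
proof -
  define mu where "mu m = lam m powr tau" for m
  define A where "A = (\<Sum>m. lam (Suc m) powr tau)"
  obtain M where M: "\<forall>m>M. lam m < eps\<^sup>2"
    using eventually_lam_lt[OF tau summ, of "eps\<^sup>2"] eps by auto
  have sub: "info_set lam I eps d \<subseteq> trunc_nabla I d M"
    by (rule info_set_subset_trunc_nabla[OF nonneg le1 M])
  have mu_nonneg: "\<forall>m. 0 \<le> mu m" unfolding mu_def by simp
  have mu1: "mu 1 = 1 \<or> T = {}" using one unfolding mu_def by auto
  note box = weighted_sum_trunc_nabla_le[of I d T mu M, OF Id T mu_nonneg mu1]
  show "finite (info_set lam I eps d)" using finite_subset[OF sub box(1)] .
  have sum_le_A: "(\<Sum>m=1..M. mu m) \<le> A"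
  proof -
    have "(\<Sum>m=1..M. mu m) = (\<Sum>n<M. mu (Suc n))" using sum.atLeast1_atMost_eq by simp
    also have "\<dots> \<le> A" unfolding A_def mu_def by (intro sum_le_suminf[OF summ]) auto
    finally show ?thesis .
  qed
  have counts_factor_nonneg: "0 \<le> (\<Prod>m=2..M. \<Sum>c\<le>card T. mu m ^ c)"
    by (intro prod_nonneg sum_nonneg) (simp add: mu_nonneg)
  have partial_sum_nonneg: "0 \<le> (\<Sum>m=1..M. mu m)" by (simp add: sum_nonneg mu_nonneg)
  have "real (card (info_set lam I eps d))
        \<le> inverse (eps powr (2*tau)) * (\<Sum>k\<in>info_set lam I eps d. \<Prod>l=1..d. mu (k l))"
    unfolding mu_def using info_set_weight_ge[OF nonneg eps] tau eps
    by (intro card_le_weight_sum) auto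
  also have "\<dots> \<le> eps powr (-(2*tau)) * (\<Sum>k\<in>trunc_nabla I d M. \<Prod>l=1..d. mu (k l))"
  proof -
    have "(\<Sum>k\<in>info_set lam I eps d. \<Prod>l=1..d. mu (k l))
          \<le> (\<Sum>k\<in>trunc_nabla I d M. \<Prod>l=1..d. mu (k l))"
      by (rule sum_mono2[OF box(1) sub]) (simp add: mu_nonneg prod_nonneg)
    then show ?thesis by (simp add: powr_minus mult_left_mono)
  qed
  also have "\<dots> \<le> eps powr (-(2*tau)) * (A ^ (d - card T) * (\<Prod>m=2..M. \<Sum>c\<le>card T. mu m ^ c))"
    using order_trans[OF box(2)
        mult_right_mono[OF power_mono[OF sum_le_A partial_sum_nonneg] counts_factor_nonneg]]
    by (rule mult_left_mono) simp
  finally show "\<exists>M. real (card (info_set lam I eps d))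
           \<le> eps powr (-(2*tau)) * (\<Sum>m. lam (Suc m) powr tau) ^ (d - card T)
              * (\<Prod>m=2..M. \<Sum>c\<le>card T. (lam m powr tau) ^ c)"
    unfolding A_def mu_def by (auto simp: mult.assoc)
qed

(* For 0 \<le> x \<le> 1/2: 1 + x + ... + x^a \<le> 1/(1-x) \<le> 1 + 2x \<le> exp (2x). *)
lemma geometric_sum_le_exp:
  fixes x :: real
  assumes "0 \<le> x" and "x \<le> 1/2"
  shows "(\<Sum>c\<le>a. x ^ c) \<le> exp (2 * x)"
proof -
  have "(1 - x) * (\<Sum>c\<le>a. x ^ c) = 1 - x ^ Suc a" by (rule sum_gp_basic)
  also have "\<dots> \<le> 1" using assms by simp
  finally have gp: "(1 - x) * (\<Sum>c\<le>a. x ^ c) \<le> 1" .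
  have "1 \<le> (1 + 2*x) * (1 - x)"
    using mult_nonneg_nonneg[of x "1 - 2*x"] assms by (simp add: algebra_simps)
  moreover have "0 \<le> (\<Sum>c\<le>a. x ^ c)" using assms by (simp add: sum_nonneg)
  ultimately have "(\<Sum>c\<le>a. x ^ c) \<le> (1 + 2*x) * (1 - x) * (\<Sum>c\<le>a. x ^ c)"
    by (simp add: mult_le_cancel_right1)
  also have "\<dots> = (1 + 2*x) * ((1 - x) * (\<Sum>c\<le>a. x ^ c))" by (simp add: mult.assoc)
  also have "\<dots> \<le> 1 + 2*x" using gp assms by (simp add: mult_left_le)
  also have "\<dots> \<le> exp (2 * x)" by (rule exp_ge_add_one_self)
  finally show ?thesis .
qed

(* Bound for the multiplicity factor: the finitely many large eigenvalue
   powers contribute at most (a+1) each, the small ones an exp of their sum. *)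
lemma counts_product_le:
  fixes mu :: "nat \<Rightarrow> real"
  assumes mu01: "\<forall>m\<ge>1. 0 \<le> mu m \<and> mu m \<le> 1" and small: "\<forall>m>r. mu m \<le> 1/2"
    and summ: "summable (\<lambda>n. mu (Suc n))"
  shows "(\<Prod>m=2..M. \<Sum>c\<le>a. mu m ^ c) \<le> (real a + 1) ^ (r - 1) * exp (2 * (\<Sum>n. mu (Suc n)))"
proof -
  define f where "f m = (if m \<le> r then real a + 1 else 1)" for m
  have factor: "(\<Sum>c\<le>a. mu m ^ c) \<le> f m * exp (2 * mu m)" if m: "m \<in> {2..M}" for m
  proof (cases "m \<le> r")
    case True
    have "(\<Sum>c\<le>a. mu m ^ c) \<le> (\<Sum>c\<le>a. 1)"
      by (rule sum_mono) (use mu01 m in \<open>auto intro: power_le_one\<close>)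
    also have "\<dots> = real a + 1" by simp
    also have "\<dots> \<le> (real a + 1) * exp (2 * mu m)"
      using mu01 m by (simp add: mult_le_cancel_left1)
    finally show ?thesis using True f_def by simp
  next
    case False
    then show ?thesis using geometric_sum_le_exp[of "mu m" a] mu01 small m f_def by auto
  qed
  have few_large: "(\<Prod>m=2..M. f m) \<le> (real a + 1) ^ (r - 1)"
  proof -
    have "(\<Prod>m=2..M. f m) = (real a + 1) ^ card {m\<in>{2..M}. m \<le> r}"
      unfolding f_def by (simp add: prod.If_cases Int_def)
    also have "\<dots> \<le> (real a + 1) ^ (r - 1)"
    proof (rule power_increasing)
      have "card {m\<in>{2..M}. m \<le> r} \<le> card {2..r}" by (rule card_mono) auto
      then show "card {m\<in>{2..M}. m \<le> r} \<le> r - 1" by simp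
    qed simp
    finally show ?thesis .
  qed
  have partial_sum: "(\<Sum>m=2..M. mu m) \<le> (\<Sum>n. mu (Suc n))"
  proof -
    have "(\<Sum>m=2..M. mu m) \<le> (\<Sum>m=1..M. mu m)"
      by (rule sum_mono2) (use mu01 in auto)
    also have "\<dots> = (\<Sum>n<M. mu (Suc n))" using sum.atLeast1_atMost_eq by simp
    also have "\<dots> \<le> (\<Sum>n. mu (Suc n))"
      by (intro sum_le_suminf[OF summ]) (use mu01 in auto)
    finally show ?thesis .
  qed
  have "(\<Prod>m=2..M. \<Sum>c\<le>a. mu m ^ c) \<le> (\<Prod>m=2..M. f m * exp (2 * mu m))"
    by (rule prod_mono) (use factor mu01 in \<open>auto intro: sum_nonneg\<close>)
  also have "\<dots> = (\<Prod>m=2..M. f m) * exp (2 * (\<Sum>m=2..M. mu m))"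
    by (simp add: prod.distrib exp_sum sum_distrib_left)
  also have "\<dots> \<le> (real a + 1) ^ (r - 1) * exp (2 * (\<Sum>n. mu (Suc n)))"
    by (rule mult_mono[OF few_large]) (use partial_sum in \<open>auto simp: f_def intro: prod_nonneg\<close>)
  finally show ?thesis .
qed

lemma powr_add_nat_le:
  fixes x y tau :: real
  assumes "0 \<le> x" and "x \<le> y"
  shows "x powr (tau + real n) \<le> x powr tau * y ^ n"
proof (cases "x = 0")
  case False
  then have "x powr (tau + real n) = x powr tau * x ^ n"
    using assms by (simp add: powr_add powr_realpow)
  also have "\<dots> \<le> x powr tau * y ^ n"
    using assms by (intro mult_left_mono power_mono) auto
  finally show ?thesis .
qed (use assms in simp)

lemma summable_powr_larger_exponent:
  fixes lam :: "nat \<Rightarrow> real"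
  assumes nonneg: "\<forall>m\<ge>1. 0 \<le> lam m" and le1: "\<forall>m\<ge>1. lam m \<le> 1"
    and summ: "summable (\<lambda>m. lam (Suc m) powr tau0)" and le: "tau0 \<le> tau"
  shows "summable (\<lambda>m. lam (Suc m) powr tau)"
proof (rule summable_comparison_test'[OF summ])
  fix n :: nat
  have "lam (Suc n) powr tau \<le> lam (Suc n) powr tau0"
    by (rule powr_mono'[OF le]) (use nonneg le1 in auto)
  then show "norm (lam (Suc n) powr tau) \<le> lam (Suc n) powr tau0" by simp
qed

lemma exponent_for_sum_le_one:
  fixes lam :: "nat \<Rightarrow> real"
  assumes nonneg: "\<forall>m\<ge>1. 0 \<le> lam m" and noninc: "\<forall>m\<ge>1. lam (Suc m) \<le> lam m"
    and lam1: "lam 1 < 1" and summ: "summable (\<lambda>m. lam (Suc m) powr tau0)"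
  obtains tau where "tau0 \<le> tau" and "summable (\<lambda>m. lam (Suc m) powr tau)"
    and "(\<Sum>m. lam (Suc m) powr tau) \<le> 1"
proof -
  define L where "L = (\<Sum>m. lam (Suc m) powr tau0)"
  have le_lam1: "lam m \<le> lam 1" if "1 \<le> m" for m by (rule lam_antimono[OF noninc _ that]) simp
  have le1: "\<forall>m\<ge>1. lam m \<le> 1" using le_lam1 lam1 by fastforce
  have "(\<lambda>n. lam 1 ^ n * L) \<longlonglongrightarrow> 0"
    using lam1 nonneg by (intro tendsto_mult_left_zero LIMSEQ_power_zero) auto
  then have "eventually (\<lambda>n. lam 1 ^ n * L < 1) sequentially"
    by (rule order_tendstoD(2)) simp
  then obtain n where n: "lam 1 ^ n * L < 1" by (auto simp: eventually_sequentially)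
  define tau where "tau = tau0 + real n"
  have le: "tau0 \<le> tau" unfolding tau_def by simp
  have summ_tau: "summable (\<lambda>m. lam (Suc m) powr tau)"
    by (rule summable_powr_larger_exponent[OF nonneg le1 summ le])
  have "(\<Sum>m. lam (Suc m) powr tau) \<le> (\<Sum>m. lam (Suc m) powr tau0 * lam 1 ^ n)"
  proof (rule suminf_le)
    show "lam (Suc m) powr tau \<le> lam (Suc m) powr tau0 * lam 1 ^ n" for m
      unfolding tau_def by (rule powr_add_nat_le) (use nonneg le_lam1 in auto)
  qed (use summ_tau summ summable_mult2 in auto)
  also have "\<dots> = L * lam 1 ^ n" unfolding L_def by (rule suminf_mult2[OF summ, symmetric])
  finally show ?thesis using that le summ_tau n by (simp add: mult.commute)
qed

lemma exponent_for_small_tail: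
  fixes lam :: "nat \<Rightarrow> real"
  assumes nonneg: "\<forall>m\<ge>1. 0 \<le> lam m" and noninc: "\<forall>m\<ge>1. lam (Suc m) \<le> lam m"
    and tau0: "0 \<le> tau0" and r: "1 \<le> r" and lt: "lam (Suc r) < 1"
  obtains tau where "tau0 \<le> tau" and "\<forall>m>r. lam m powr tau \<le> 1/2"
proof -
  have "(\<lambda>n. lam (Suc r) ^ n) \<longlonglongrightarrow> 0"
    using lt nonneg by (intro LIMSEQ_power_zero) auto
  then have "eventually (\<lambda>n. lam (Suc r) ^ n < 1/2) sequentially"
    by (rule order_tendstoD(2)) simp
  then obtain n where n: "lam (Suc r) ^ n < 1/2" by (auto simp: eventually_sequentially)
  have "lam m powr (tau0 + real n) \<le> 1/2" if m: "m > r" for m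
  proof -
    have le_r: "lam m \<le> lam (Suc r)" by (rule lam_antimono[OF noninc]) (use m in auto)
    have "lam m powr (tau0 + real n) \<le> lam m powr tau0 * lam (Suc r) ^ n"
      by (rule powr_add_nat_le) (use nonneg m r le_r in auto)
    also have "\<dots> \<le> 1 * (1/2)"
      using n le_r lt nonneg m r tau0 by (intro mult_mono powr_le1) auto
    finally show ?thesis by simp
  qed
  then show ?thesis using that[of "tau0 + real n"] by auto
qed

lemma le_plus_if_eventually_le:
  fixes f :: "nat \<Rightarrow> nat" and g :: "nat \<Rightarrow> real"
  assumes g_nonneg: "\<forall>d. 0 \<le> g d" and ev: "eventually (\<lambda>d. real (f d) \<le> g d) at_top"
  obtains K :: nat where "\<forall>d. real (f d) \<le> real K + g d"
proof -
  obtain N where N: "\<forall>d\<ge>N. real (f d) \<le> g d" using ev by (auto simp: eventually_at_top_linorder)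
  define K where "K = (\<Sum>d<N. f d)"
  have "real (f d) \<le> real K + g d" for d
  proof (cases "d < N")
    case True
    then have "f d \<le> K" unfolding K_def by (intro member_le_sum) auto
    then show ?thesis using g_nonneg[rule_format, of d] by linarith
  next
    case False
    then show ?thesis using N by (simp add: add_increasing)
  qed
  then show ?thesis using that by blast
qed

(* Part (i): take T = {}; then n(eps,d) \<le> eps^(-2 tau) \<cdot> A^d with A \<le> 1. *)
lemma strongly_poly_tractable_if_lam1_lt_1:
  fixes lam :: "nat \<Rightarrow> real"
  assumes nonneg: "\<forall>m\<ge>1. 0 \<le> lam m" and noninc: "\<forall>m\<ge>1. lam (Suc m) \<le> lam m"
    and I_sub: "\<forall>d\<ge>1. I d \<subseteq> {1..d}" and lam1: "lam 1 < 1"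
    and tau0: "0 < tau0" and summ: "summable (\<lambda>m. lam (Suc m) powr tau0)"
  shows "strongly_poly_tractable lam I"
proof -
  obtain tau where tau: "tau0 \<le> tau" and summ_tau: "summable (\<lambda>m. lam (Suc m) powr tau)"
    and sum_le1: "(\<Sum>m. lam (Suc m) powr tau) \<le> 1"
    using exponent_for_sum_le_one[OF nonneg noninc lam1 summ] by blast
  have le1: "\<forall>m\<ge>1. lam m \<le> 1"
    using lam_antimono[OF noninc, of 1] lam1 by fastforce
  have tau_pos: "0 < tau" using tau tau0 by simp
  show ?thesis unfolding strongly_poly_tractable_def
  proof (intro exI conjI allI impI)
    show "(0::real) < 1" and "0 < 2 * tau" using tau_pos by simp_all
    fix d :: nat and eps :: real
    assume d: "1 \<le> d" and "0 < eps \<and> eps \<le> 1"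
    then have eps: "0 < eps" by simp
    note bound = card_info_set_le[of lam I d "{}", OF nonneg le1 _ _ eps tau_pos summ_tau]
    have "(\<Sum>m. lam (Suc m) powr tau) ^ d \<le> 1"
      using sum_le1 summ_tau by (simp add: power_le_one suminf_nonneg)
    then have "eps powr (-(2*tau)) * (\<Sum>m. lam (Suc m) powr tau) ^ d \<le> eps powr (-(2*tau))"
      by (simp add: mult_left_le)
    then show "finite (info_set lam I eps d)"
      and "real (card (info_set lam I eps d)) \<le> 1 * eps powr (-(2*tau))"
      using bound I_sub d by auto
  qed
qed

(* The estimate for lam 1 = 1 with T = I d: the exponent b_d enters through A^b_d,
   the size a_d = card (I d) only through the (r-1) eigenvalues above 1/2. *)
lemma info_set_bound_lam1_eq_1:
  fixes lam :: "nat \<Rightarrow> real"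
  assumes nonneg: "\<forall>m\<ge>1. 0 \<le> lam m" and noninc: "\<forall>m\<ge>1. lam (Suc m) \<le> lam m"
    and I_sub: "\<forall>d\<ge>1. I d \<subseteq> {1..d}" and lam1: "lam 1 = 1"
    and tau0: "0 < tau0" and summ: "summable (\<lambda>m. lam (Suc m) powr tau0)"
    and r: "1 \<le> r" and lt: "lam (Suc r) < 1"
  obtains tau A where "0 < tau" and "1 \<le> A"
    and "\<forall>d\<ge>1. \<forall>eps>0. finite (info_set lam I eps d) \<and>
           real (card (info_set lam I eps d))
             \<le> eps powr (-(2*tau)) * A ^ b_of I d * ((real (card (I d)) + 1) ^ (r - 1) * exp (2 * A))"
proof -
  obtain tau where tau: "tau0 \<le> tau" and small: "\<forall>m>r. lam m powr tau \<le> 1/2"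
    using exponent_for_small_tail[OF nonneg noninc less_imp_le[OF tau0] r lt] by blast
  have tau_pos: "0 < tau" using tau tau0 by simp
  have le1: "\<forall>m\<ge>1. lam m \<le> 1"
    using lam_antimono[OF noninc, of 1] lam1 by fastforce
  have summ_tau: "summable (\<lambda>m. lam (Suc m) powr tau)"
    by (rule summable_powr_larger_exponent[OF nonneg le1 summ tau])
  define A where "A = (\<Sum>m. lam (Suc m) powr tau)"
  have A_ge1: "1 \<le> A"
  proof -
    have "(\<Sum>m\<in>{0}. lam (Suc m) powr tau) \<le> A"
      unfolding A_def by (rule sum_le_suminf[OF summ_tau]) auto
    then show ?thesis using lam1 by simp
  qed
  have mu01: "\<forall>m\<ge>1. 0 \<le> lam m powr tau \<and> lam m powr tau \<le> 1"
    using nonneg le1 tau_pos by (auto intro!: powr_le1)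
  have "finite (info_set lam I eps d) \<and> real (card (info_set lam I eps d))
          \<le> eps powr (-(2*tau)) * A ^ b_of I d * ((real (card (I d)) + 1) ^ (r - 1) * exp (2 * A))"
    if d: "1 \<le> d" and eps: "0 < eps" for d eps
  proof -
    obtain M where M: "real (card (info_set lam I eps d))
        \<le> eps powr (-(2*tau)) * A ^ b_of I d * (\<Prod>m=2..M. \<Sum>c\<le>card (I d). (lam m powr tau) ^ c)"
      using card_info_set_le(2)[of lam I d "I d", OF nonneg le1 _ _ eps tau_pos summ_tau] I_sub d lam1
      unfolding A_def b_of_def by auto
    have "(\<Prod>m=2..M. \<Sum>c\<le>card (I d). (lam m powr tau) ^ c)
          \<le> (real (card (I d)) + 1) ^ (r - 1) * exp (2 * A)"
      unfolding A_def by (rule counts_product_le[OF mu01 small summ_tau])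
    then have "real (card (info_set lam I eps d))
        \<le> eps powr (-(2*tau)) * A ^ b_of I d * ((real (card (I d)) + 1) ^ (r - 1) * exp (2 * A))"
      using A_ge1 by (intro order_trans[OF M] mult_left_mono) auto
    then show ?thesis
      using card_info_set_le(1)[of lam I d "I d", OF nonneg le1 _ _ eps tau_pos summ_tau] I_sub d lam1
      by auto
  qed
  then show ?thesis using that[OF tau_pos A_ge1] by blast
qed

lemma power_le_poly_if_bigO_ln:
  fixes f :: "nat \<Rightarrow> nat" and A :: real
  assumes A: "1 \<le> A" and f: "(\<lambda>d. real (f d)) \<in> O(\<lambda>d. ln (real d))"
  obtains C q where "0 < C" and "0 \<le> q" and "\<forall>d\<ge>1. A ^ f d \<le> C * real d powr q"
proof -
  obtain c where c: "0 < c" and ev: "eventually (\<lambda>d. norm (real (f d)) \<le> c * norm (ln (real d))) at_top"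
    using f by (elim landau_o.bigE)
  obtain K where K: "\<forall>d. real (f d) \<le> real K + c * \<bar>ln (real d)\<bar>"
    using le_plus_if_eventually_le[of "\<lambda>d. c * \<bar>ln (real d)\<bar>" f] c ev by auto
  have "A ^ f d \<le> A ^ K * real d powr (c * ln A)" if d: "1 \<le> d" for d
  proof -
    have "A ^ f d = A powr real (f d)" using A by (simp add: powr_realpow)
    also have "\<dots> \<le> A powr (real K + c * ln (real d))"
      using K[rule_format, of d] d A by (intro powr_mono) auto
    also have "\<dots> = A powr real K * A powr (c * ln (real d))" by (rule powr_add)
    also have "\<dots> = A ^ K * real d powr (c * ln A)"
    proof -
      have "A powr real K = A ^ K" using A by (simp add: powr_realpow)
      moreover have "A powr (c * ln (real d)) = real d powr (c * ln A)"
        using A d by (simp add: powr_def mult_ac)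
      ultimately show ?thesis by simp
    qed
    finally show ?thesis .
  qed
  moreover have "0 \<le> c * ln A" using c A by simp
  ultimately show ?thesis using that[of "A ^ K" "c * ln A"] A by simp
qed

(* Part (ii): with lam 2 < 1 one can take r = 1, and A^b_d is bounded. *)
lemma strongly_poly_tractable_if_lam2_lt_1:
  fixes lam :: "nat \<Rightarrow> real"
  assumes nonneg: "\<forall>m\<ge>1. 0 \<le> lam m" and noninc: "\<forall>m\<ge>1. lam (Suc m) \<le> lam m"
    and I_sub: "\<forall>d\<ge>1. I d \<subseteq> {1..d}" and lam1: "lam 1 = 1" and lam2: "lam 2 < 1"
    and tau0: "0 < tau0" and summ: "summable (\<lambda>m. lam (Suc m) powr tau0)"
    and b_bounded: "(\<lambda>d. real (b_of I d)) \<in> O(\<lambda>_. 1)"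
  shows "strongly_poly_tractable lam I"
proof -
  obtain tau A where tau: "0 < tau" and A: "1 \<le> A"
    and bound: "\<forall>d\<ge>1. \<forall>eps>0. finite (info_set lam I eps d) \<and>
           real (card (info_set lam I eps d)) \<le> eps powr (-(2*tau)) * A ^ b_of I d * exp (2 * A)"
    using info_set_bound_lam1_eq_1[OF nonneg noninc I_sub lam1 tau0 summ, of 1] lam2
    by (auto simp: numeral_2_eq_2)
  obtain c where ev: "eventually (\<lambda>d. norm (real (b_of I d)) \<le> c * norm (1::real)) at_top"
    using b_bounded by (elim landau_o.bigE)
  then have "eventually (\<lambda>d. real (b_of I d) \<le> \<bar>c\<bar>) at_top"
    by (rule eventually_mono) auto
  then obtain K where K: "\<forall>d. real (b_of I d) \<le> real K + \<bar>c\<bar>"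
    using le_plus_if_eventually_le[of "\<lambda>_. \<bar>c\<bar>" "b_of I"] by auto
  define B where "B = K + nat \<lceil>\<bar>c\<bar>\<rceil>"
  have uniform: "eps powr (-(2*tau)) * A ^ b_of I d * exp (2 * A)
                  \<le> A ^ B * exp (2 * A) * eps powr (-(2*tau))" for d eps
  proof -
    have "A ^ b_of I d \<le> A ^ B"
      using K[rule_format, of d] A unfolding B_def by (intro power_increasing) linarith+
    then have "A ^ b_of I d * (exp (2 * A) * eps powr (-(2*tau)))
               \<le> A ^ B * (exp (2 * A) * eps powr (-(2*tau)))"
      by (rule mult_right_mono) simp
    then show ?thesis by (simp add: mult_ac)
  qed
  show ?thesis unfolding strongly_poly_tractable_def
  proof (intro exI conjI allI impI)
    show "0 < A ^ B * exp (2 * A)" and "0 < 2 * tau" using A tau by simp_all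
    fix d :: nat and eps :: real
    assume "1 \<le> d" and "0 < eps \<and> eps \<le> 1"
    then have "finite (info_set lam I eps d)"
      and "real (card (info_set lam I eps d)) \<le> eps powr (-(2*tau)) * A ^ b_of I d * exp (2 * A)"
      using bound by auto
    then show "finite (info_set lam I eps d)"
      and "real (card (info_set lam I eps d)) \<le> A ^ B * exp (2 * A) * eps powr (-(2*tau))"
      using uniform[of eps d] by linarith+
  qed
qed

lemma card_succ_power_le:
  assumes S: "S \<subseteq> {1..d}" and d: "1 \<le> d"
  shows "(real (card S) + 1) ^ n \<le> 2 ^ n * real d powr real n"
proof -
  have "card S \<le> card {1..d}" using S by (intro card_mono) auto
  then have "(real (card S) + 1) ^ n \<le> (2 * real d) ^ n"
    using d by (intro power_mono) auto
  also have "\<dots> = 2 ^ n * real d powr real n"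
    using d by (simp add: power_mult_distrib powr_realpow)
  finally show ?thesis .
qed

(* Part (iii): (a_d + 1)^(r-1) \<le> (2d)^(r-1) and A^b_d \<le> C d^q. *)
lemma poly_tractable_if_b_log:
  fixes lam :: "nat \<Rightarrow> real"
  assumes nonneg: "\<forall>m\<ge>1. 0 \<le> lam m" and noninc: "\<forall>m\<ge>1. lam (Suc m) \<le> lam m"
    and I_sub: "\<forall>d\<ge>1. I d \<subseteq> {1..d}" and lam1: "lam 1 = 1"
    and tau0: "0 < tau0" and summ: "summable (\<lambda>m. lam (Suc m) powr tau0)"
    and b_log: "(\<lambda>d. real (b_of I d)) \<in> O(\<lambda>d. ln (real d))"
  shows "poly_tractable lam I"
proof -
  obtain N where N: "\<forall>m>N. lam m < 1" using eventually_lam_lt[OF tau0 summ, of 1] by auto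
  define r where "r = Suc N"
  obtain tau A where tau: "0 < tau" and A: "1 \<le> A"
    and bound: "\<forall>d\<ge>1. \<forall>eps>0. finite (info_set lam I eps d) \<and>
           real (card (info_set lam I eps d))
             \<le> eps powr (-(2*tau)) * A ^ b_of I d * ((real (card (I d)) + 1) ^ (r - 1) * exp (2 * A))"
    using info_set_bound_lam1_eq_1[OF nonneg noninc I_sub lam1 tau0 summ, of r] N
    unfolding r_def by auto
  obtain C q where C: "0 < C" and q: "0 \<le> q" and pow_b: "\<forall>d\<ge>1. A ^ b_of I d \<le> C * real d powr q"
    using power_le_poly_if_bigO_ln[OF A b_log] by blast
  show ?thesis unfolding poly_tractable_def
  proof (intro exI conjI allI impI)
    show "0 < C * 2 ^ (r - 1) * exp (2 * A)" and "0 < 2 * tau" and "0 \<le> q + real (r - 1)"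
      using C tau q by simp_all
    fix d :: nat and eps :: real
    assume d: "1 \<le> d" and "0 < eps \<and> eps \<le> 1"
    then show "finite (info_set lam I eps d)" using bound by simp
    have "real (card (info_set lam I eps d))
          \<le> eps powr (-(2*tau)) * A ^ b_of I d * ((real (card (I d)) + 1) ^ (r - 1) * exp (2 * A))"
      using bound d \<open>0 < eps \<and> eps \<le> 1\<close> by simp
    also have "\<dots> \<le> eps powr (-(2*tau)) * (C * real d powr q)
                      * ((2 ^ (r - 1) * real d powr real (r - 1)) * exp (2 * A))"
      using pow_b card_succ_power_le[of "I d" d "r - 1"] I_sub d A C
      by (intro mult_mono mult_left_mono) auto
    also have "\<dots> = C * 2 ^ (r - 1) * exp (2 * A) * eps powr (-(2*tau))
                      * real d powr (q + real (r - 1))"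
      by (simp add: powr_add mult_ac)
    finally show "real (card (info_set lam I eps d))
           \<le> C * 2 ^ (r - 1) * exp (2 * A) * eps powr (-(2*tau)) * real d powr (q + real (r - 1))" .
  qed
qed

theorem proposition5:
  fixes lam :: "nat \<Rightarrow> real" and I :: "nat \<Rightarrow> nat set" and tau0 :: real
  assumes nonneg: "\<forall>m\<ge>1. 0 \<le> lam m"
    and noninc: "\<forall>m\<ge>1. lam (Suc m) \<le> lam m"
    and lam2_pos: "lam 2 > 0"
    and I_ok: "\<forall>d\<ge>1. I d \<noteq> {} \<and> I d \<subseteq> {1..d}"
    and I1: "I 1 = {1}"
    and tau0_pos: "tau0 > 0"
    and ltau: "summable (\<lambda>m. lam (Suc m) powr tau0)"
  shows "(lam 1 < 1 \<longrightarrow> strongly_poly_tractable lam I)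
       \<and> (lam 1 = 1 \<and> lam 2 < 1 \<and> (\<lambda>d. real (b_of I d)) \<in> O(\<lambda>_. 1)
            \<longrightarrow> strongly_poly_tractable lam I)
       \<and> (lam 1 = 1 \<and> (\<lambda>d. real (b_of I d)) \<in> O(\<lambda>d. ln (real d))
            \<longrightarrow> poly_tractable lam I)"
proof -
  have I_sub: "\<forall>d\<ge>1. I d \<subseteq> {1..d}" using I_ok by blast
  show ?thesis
    using strongly_poly_tractable_if_lam1_lt_1[OF nonneg noninc I_sub _ tau0_pos ltau]
      strongly_poly_tractable_if_lam2_lt_1[OF nonneg noninc I_sub _ _ tau0_pos ltau]
      poly_tractable_if_b_log[OF nonneg noninc I_sub _ tau0_pos ltau]
    by blast
qed

end
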